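(* Under the hypotheses of the following statement, assume in addition that the solution $s(t)$ is persistent. Then $s(t)\to\bar s$ as $t\to\infty$. Statement: consider the generalized mass-action system $\dot s=f(u,s)=\sum_{j=1}^{r}u_j(t)\,s^{v_{\cdot j}}(v'_{\cdot j}-v_{\cdot j})$, $s(0)=s_0\in\mathbb{R}^n_{\ge0}$, with $u:[0,\infty)\to\mathbb{U}\subset\mathbb{R}^r_{>0}$, $\lim_{t\to\infty}u(t)=\bar u\in\mathbb{R}^r_{>0}$, $s(t)$ a bounded solution defined for all $t\ge0$, $\bar s\in\mathbb{R}^n_{>0}$ the unique equilibrium of $\dot s=f(\bar u,s)$ in $(s_0+\mathscr{S})\cap\mathbb{R}^n_{>0}$, and $V$ an ISS-Lyapunov function with respect to $(\bar u,\bar s)$ for this system.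
   Context: A CRN has species $S_1,\dots,S_n$ and reactions $v_{\cdot j}\to v'_{\cdot j}$, $j=1,\dots,r$, $v_{\cdot j},v'_{\cdot j}\in\mathbb{Z}^n_{\ge0}$, $v_{\cdot j}\ne v'_{\cdot j}$; $s^{v}=\prod_i s_i^{v_i}$ with $0^0=1$; $\mathscr{S}=\mathrm{span}\{v'_{\cdot j}-v_{\cdot j}\}$ is the stoichiometric subspace. A solution $s(t)$ is persistent if $\liminf_{t\to\infty}s_i(t)>0$ for every $i=1,\dots,n$. ISS-Lyapunov function with respect to $(\bar u,\bar s)$: a continuous $V:\mathbb{R}^n_{\ge0}\to\mathbb{R}_{\ge0}$ such that (i) $V|_{\mathbb{R}^n_{>0}}$ is $C^1$; (ii) $V(s)\to\infty$ as $|s|\to\infty$; (iii) $V(\bar s)=0$ and $V(s)>0$ for $s\ne\bar s$; (iv) for each compact $F\subset\mathbb{R}^n_{\ge0}$ there exist class $\mathcal{K}_\infty$ functions $\alpha,\rho$ (continuous, strictly increasing, zero at zero, unbounded) with $\nabla V(s)^\top f(u,s)\le-\alpha(|s-\bar s|)+\rho(|u-\bar u|)$ for all $u\in\mathbb{U}$, $s\in F\cap(s_0+\mathscr{S})\cap\mathbb{R}^n_{>0}$. *)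

theory Defs
  imports "HOL-Analysis.Analysis"
begin

text \<open>Species are indexed by a finite type 'n, reactions by a finite type 'r.
  A reaction j has reactant complex v j and product complex v' j (in nat^'n).\<close>

definition nonneg_orthant :: "(real^'n) set" where
  "nonneg_orthant = {x. \<forall>i. 0 \<le> x $ i}"

definition pos_orthant :: "(real^'n) set" where
  "pos_orthant = {x. \<forall>i. 0 < x $ i}"

text \<open>Monomial s^v with 0^0 = 1 (as for nat powers in Isabelle).\<close>
definition monom :: "real^'n \<Rightarrow> nat^'n \<Rightarrow> real" where
  "monom s w = (\<Prod>i\<in>UNIV. (s $ i) ^ (w $ i))"

definition reaction_vec :: "nat^'n \<Rightarrow> nat^'n \<Rightarrow> real^'n" where
  "reaction_vec w w' = (\<chi> i. real (w' $ i) - real (w $ i))"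

definition gma_field ::
  "('r::finite \<Rightarrow> nat^'n) \<Rightarrow> ('r \<Rightarrow> nat^'n) \<Rightarrow> real^'r \<Rightarrow> real^'n \<Rightarrow> real^'n" where
  "gma_field v v' u s = (\<Sum>j\<in>UNIV. (u $ j * monom s (v j)) *\<^sub>R reaction_vec (v j) (v' j))"

definition stoich_subspace ::
  "('r::finite \<Rightarrow> nat^'n) \<Rightarrow> ('r \<Rightarrow> nat^'n) \<Rightarrow> (real^'n) set" where
  "stoich_subspace v v' = span (range (\<lambda>j. reaction_vec (v j) (v' j)))"

definition class_Kinf :: "(real \<Rightarrow> real) \<Rightarrow> bool" where
  "class_Kinf a \<longleftrightarrow> continuous_on {0..} a \<and> strict_mono_on {0..} a \<and> a 0 = 0
     \<and> filterlim a at_top at_top"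

definition ISS_Lyapunov ::
  "('r::finite \<Rightarrow> nat^'n) \<Rightarrow> ('r \<Rightarrow> nat^'n) \<Rightarrow> (real^'r) set \<Rightarrow> real^'n
    \<Rightarrow> real^'r \<Rightarrow> real^'n \<Rightarrow> (real^'n \<Rightarrow> real) \<Rightarrow> bool" where
  "ISS_Lyapunov v v' U s0 ubar sbar V \<longleftrightarrow>
     continuous_on nonneg_orthant V \<and> (\<forall>x\<in>nonneg_orthant. 0 \<le> V x) \<and>
     (\<exists>grad. (\<forall>x\<in>pos_orthant. (V has_derivative (\<lambda>h. grad x \<bullet> h)) (at x))
        \<and> continuous_on pos_orthant grad
        \<and> (\<forall>M. \<exists>R. \<forall>x\<in>nonneg_orthant. R \<le> norm x \<longrightarrow> M \<le> V x)
        \<and> V sbar = 0 \<and> (\<forall>x\<in>nonneg_orthant. x \<noteq> sbar \<longrightarrow> 0 < V x)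
        \<and> (\<forall>F. compact F \<and> F \<subseteq> nonneg_orthant \<longrightarrow>
             (\<exists>\<alpha> \<rho>. class_Kinf \<alpha> \<and> class_Kinf \<rho> \<and>
               (\<forall>u\<in>U. \<forall>x\<in>F \<inter> (\<lambda>y. s0 + y) ` stoich_subspace v v' \<inter> pos_orthant.
                  grad x \<bullet> gma_field v v' u x \<le> - \<alpha> (norm (x - sbar)) + \<rho> (norm (u - ubar))))))"

end

(* Persistence puts the trajectory eventually into the open orthant, and by boundedness into a
   compact set K containing sbar; since s(t) - s0 stays in the stoichiometric subspace, the
   ISS estimate applies along the trajectory, giving for W(t) = V(s(t)) the bound
   W' <= -alpha |s - sbar| + rho |u - ubar|, where the last term tends to 0.  By continuity of
   V at sbar, W >= c forces |s - sbar| >= r, so above every level c > 0 the function W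
   eventually decreases at a uniform rate: it reaches [0, c] and can never leave it again.
   Hence W -> 0, and positive definiteness of V on the compact K turns this into s -> sbar. *)

theory Submission
  imports Defs
begin

lemma closed_nonneg_orthant: "closed (nonneg_orthant :: (real^'n) set)"
  unfolding nonneg_orthant_def
  by (intro closed_Collect_all closed_Collect_le continuous_intros)

lemma pos_orthant_subset_nonneg_orthant: "pos_orthant \<subseteq> nonneg_orthant"
  unfolding pos_orthant_def nonneg_orthant_def by (auto intro: less_imp_le)

lemma eventually_in_compact_subset_nonneg_orthant:
  fixes s :: "real \<Rightarrow> real^'n"
  assumes "bounded (s ` {0..})" and "\<forall>\<^sub>F t in at_top. s t \<in> nonneg_orthant"
    and "p \<in> nonneg_orthant"
  obtains K where "compact K" "K \<subseteq> nonneg_orthant" "p \<in> K" "\<forall>\<^sub>F t in at_top. s t \<in> K"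
proof -
  have "bounded (insert p (s ` {0..}))"
    using assms(1) by simp
  then obtain M where M: "\<forall>x\<in>insert p (s ` {0..}). norm x \<le> M"
    unfolding bounded_iff by blast
  show ?thesis
  proof (rule that[of "cball 0 M \<inter> nonneg_orthant"])
    show "compact (cball 0 M \<inter> nonneg_orthant)"
      by (intro compact_Int_closed compact_cball closed_nonneg_orthant)
    show "\<forall>\<^sub>F t in at_top. s t \<in> cball 0 M \<inter> nonneg_orthant"
      using assms(2) eventually_ge_at_top[of 0] by eventually_elim (use M in auto)
  qed (use M assms(3) in auto)
qed

lemma eventually_pos_orthant_if_Liminf_pos:
  fixes s :: "'a \<Rightarrow> real^'n"
  assumes "\<And>i. Liminf F (\<lambda>t. ereal (s t $ i)) > 0"
  shows "\<forall>\<^sub>F t in F. s t \<in> pos_orthant"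
proof -
  have "\<forall>\<^sub>F t in F. \<forall>i. 0 < s t $ i"
    using less_LiminfD[OF assms[unfolded zero_ereal_def]] by (intro eventually_all_finite) simp
  then show ?thesis
    unfolding pos_orthant_def by simp
qed

lemma gma_field_in_stoich_subspace: "gma_field v v' u x \<in> stoich_subspace v v'"
  unfolding gma_field_def stoich_subspace_def
  by (intro span_sum span_scale span_base) auto

lemma diff_in_span_if_vector_derivative_in_span:
  fixes x :: "real \<Rightarrow> 'a::euclidean_space"
  assumes deriv: "\<And>t. 0 \<le> t \<Longrightarrow> (x has_vector_derivative x' t) (at t within {0..})"
    and x'_span: "\<And>t. 0 \<le> t \<Longrightarrow> x' t \<in> span S"
    and "0 \<le> t"
  shows "x t - x 0 \<in> span S"
proof -
  \<comment> \<open>For the component z of x t - x 0 orthogonal to span S, z \<bullet> x is constant; so z = 0.\<close>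
  obtain y z where y: "y \<in> span S" and z: "\<And>w. w \<in> span S \<Longrightarrow> z \<bullet> w = 0"
    and decomp: "x t - x 0 = y + z"
    using orthogonal_subspace_decomp_exists[of S "x t - x 0"] unfolding orthogonal_def by metis
  have const: "((\<lambda>\<tau>. z \<bullet> x \<tau>) has_derivative (\<lambda>h. 0)) (at \<tau> within {0..t})"
    if "\<tau> \<in> {0..t}" for \<tau>
  proof -
    have "(x has_derivative (\<lambda>h. h *\<^sub>R x' \<tau>)) (at \<tau> within {0..t})"
      using has_vector_derivative_within_subset[OF deriv] that
      by (auto simp: has_vector_derivative_def)
    then have "((\<lambda>\<tau>. z \<bullet> x \<tau>) has_derivative (\<lambda>h. h * (z \<bullet> x' \<tau>))) (at \<tau> within {0..t})"
      by (auto intro!: derivative_eq_intros)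
    then show ?thesis
      using z[OF x'_span] that by simp
  qed
  have "z \<bullet> x t = z \<bullet> x 0"
    by (rule has_derivative_zero_unique_strong_interval[of "{}" 0 t "\<lambda>\<tau>. z \<bullet> x \<tau>"])
       (use const has_derivative_continuous_on[OF const] \<open>0 \<le> t\<close> in auto)
  then have "z \<bullet> (y + z) = 0"
    using decomp[symmetric] by (simp add: inner_diff_right)
  then have "z \<bullet> z = 0"
    using z[OF y] by (simp add: inner_add_right)
  then show ?thesis
    using decomp y by simp
qed

lemma gma_solution_in_stoich_class:
  assumes "\<And>t. 0 \<le> t \<Longrightarrow>
             (s has_vector_derivative gma_field v v' (u t) (s t)) (at t within {0..})"
    and "0 \<le> t"
  shows "s t \<in> (\<lambda>y. s 0 + y) ` stoich_subspace v v'"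
proof -
  have "s t - s 0 \<in> stoich_subspace v v'"
    using diff_in_span_if_vector_derivative_in_span[OF assms(1) _ assms(2)]
      gma_field_in_stoich_subspace unfolding stoich_subspace_def by blast
  then show ?thesis
    by (force intro: image_eqI[of _ _ "s t - s 0"])
qed

lemma class_Kinf_pos: "class_Kinf \<alpha> \<Longrightarrow> 0 < r \<Longrightarrow> 0 < \<alpha> r"
  unfolding class_Kinf_def by (metis atLeast_iff order_refl less_imp_le strict_mono_onD)

lemma class_Kinf_mono: "class_Kinf \<alpha> \<Longrightarrow> 0 \<le> x \<Longrightarrow> x \<le> y \<Longrightarrow> \<alpha> x \<le> \<alpha> y"
  unfolding class_Kinf_def by (auto intro: strict_mono_on_leD)

lemma tendsto_class_Kinf_zero:
  assumes "class_Kinf \<rho>" and "(f \<longlongrightarrow> 0) F" and "\<forall>\<^sub>F x in F. 0 \<le> f x"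
  shows "((\<lambda>x. \<rho> (f x)) \<longlongrightarrow> 0) F"
  using continuous_on_tendsto_compose[of "{0..}" \<rho> f 0 F] assms
  unfolding class_Kinf_def by simp

lemma has_real_derivative_gradient_comp:
  assumes "(V has_derivative (\<lambda>h. g \<bullet> h)) (at (s t))"
    and "(s has_vector_derivative s') (at t)"
  shows "((\<lambda>t. V (s t)) has_real_derivative g \<bullet> s') (at t)"
proof -
  have "((\<lambda>t. V (s t)) has_derivative (\<lambda>h. g \<bullet> (h *\<^sub>R s'))) (at t)"
    using diff_chain_at[OF assms(2)[unfolded has_vector_derivative_def] assms(1)]
    by (simp add: o_def)
  then show ?thesis
    by (simp add: has_field_derivative_def mult_commute_abs)
qed

lemma le_if_DERIV_nonpos_above:
  fixes W W' :: "real \<Rightarrow> real"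
  assumes deriv: "\<And>x. a \<le> x \<Longrightarrow> x \<le> b \<Longrightarrow> (W has_real_derivative W' x) (at x)"
    and nonpos: "\<And>x. a \<le> x \<Longrightarrow> x \<le> b \<Longrightarrow> c < W x \<Longrightarrow> W' x \<le> 0"
    and "W a \<le> c" and "a \<le> b"
  shows "W b \<le> c"
proof -
  \<comment> \<open>After the last time Sup A at which W is at most c, W is nonincreasing.\<close>
  define A where "A = {a..b} \<inter> W -` {..c}"
  have "continuous_on {a..b} W"
    using deriv by (intro continuous_at_imp_continuous_on ballI DERIV_isCont) auto
  then have "closed A"
    unfolding A_def by (intro continuous_closed_preimage) auto
  moreover have "a \<in> A" and bdd: "bdd_above A"
    using assms(3,4) unfolding A_def by auto
  ultimately have "Sup A \<in> A"
    using closed_contains_Sup by blast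
  then have m: "a \<le> Sup A" "Sup A \<le> b" "W (Sup A) \<le> c"
    unfolding A_def by auto
  show ?thesis
  proof (cases "Sup A = b")
    case False
    have above: "c < W x" if "Sup A < x" "x \<le> b" for x
      using that m cSup_upper[OF _ bdd, of x] unfolding A_def by force
    obtain z where z: "Sup A < z" "z < b" "W b - W (Sup A) = (b - Sup A) * W' z"
      using MVT2[of "Sup A" b W W'] False m deriv by auto
    have "(b - Sup A) * W' z \<le> 0"
      using z nonpos[of z] above[of z] m by (simp add: mult_nonneg_nonpos)
    then show ?thesis
      using z m by linarith
  qed (use m in simp)
qed

lemma exists_less_if_DERIV_le_neg:
  fixes W W' :: "real \<Rightarrow> real"
  assumes "0 < a"
    and deriv: "\<And>t. T \<le> t \<Longrightarrow> (W has_real_derivative W' t) (at t)"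
    and nonneg: "\<And>t. T \<le> t \<Longrightarrow> 0 \<le> W t"
    and decr: "\<And>t. T \<le> t \<Longrightarrow> c \<le> W t \<Longrightarrow> W' t \<le> -a"
  shows "\<exists>t\<ge>T. W t < c"
proof (rule ccontr)
  assume "\<not> ?thesis"
  then have above: "\<And>t. T \<le> t \<Longrightarrow> c \<le> W t"
    by (simp add: not_less)
  define t where "t = T + (W T + 1) / a"
  have "T < t"
    unfolding t_def using nonneg[of T] \<open>0 < a\<close> by simp
  then obtain z where z: "T < z" "z < t" "W t - W T = (t - T) * W' z"
    using MVT2[of T t W W'] deriv by auto
  have "(t - T) * W' z \<le> (t - T) * (- a)"
    using z decr[of z] above[of z] by (intro mult_left_mono) auto
  then have "W t \<le> W T - (t - T) * a"
    using z(3) by simp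
  also have "\<dots> = -1"
    unfolding t_def using \<open>0 < a\<close> by simp
  finally show False
    using nonneg[of t] \<open>T < t\<close> by simp
qed

lemma tendsto_zero_if_DERIV_uniformly_neg_above:
  fixes W W' :: "real \<Rightarrow> real"
  assumes deriv: "\<forall>\<^sub>F t in at_top. (W has_real_derivative W' t) (at t)"
    and nonneg: "\<forall>\<^sub>F t in at_top. 0 \<le> W t"
    and decr: "\<And>c. 0 < c \<Longrightarrow> \<exists>a>0. \<forall>\<^sub>F t in at_top. c \<le> W t \<longrightarrow> W' t \<le> -a"
  shows "(W \<longlongrightarrow> 0) at_top"
proof -
  have "\<forall>\<^sub>F t in at_top. W t \<le> c" if "0 < c" for c
  proof -
    obtain a where "0 < a" and "\<forall>\<^sub>F t in at_top. c \<le> W t \<longrightarrow> W' t \<le> -a"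
      using decr \<open>0 < c\<close> by blast
    with deriv nonneg have "\<forall>\<^sub>F t in at_top.
        (W has_real_derivative W' t) (at t) \<and> 0 \<le> W t \<and> (c \<le> W t \<longrightarrow> W' t \<le> -a)"
      by (intro eventually_conj)
    then obtain T where T: "\<And>t. T \<le> t \<Longrightarrow>
        (W has_real_derivative W' t) (at t) \<and> 0 \<le> W t \<and> (c \<le> W t \<longrightarrow> W' t \<le> -a)"
      unfolding eventually_at_top_linorder by blast
    obtain t1 where "T \<le> t1" "W t1 < c"
      using exists_less_if_DERIV_le_neg[of a T W W' c] \<open>0 < a\<close> T by auto
    have "W t \<le> c" if "t1 \<le> t" for t
    proof (rule le_if_DERIV_nonpos_above[of t1 t W W' c])
      show "(W has_real_derivative W' x) (at x)" if "t1 \<le> x" for x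
        using T[of x] \<open>T \<le> t1\<close> that by simp
      show "W' x \<le> 0" if "t1 \<le> x" "c < W x" for x
        using T[of x] \<open>T \<le> t1\<close> \<open>0 < a\<close> that by simp
    qed (use \<open>W t1 < c\<close> that in auto)
    then show ?thesis
      unfolding eventually_at_top_linorder by blast
  qed
  note le_eventually = this
  show ?thesis
  proof (rule order_tendstoI)
    fix b :: real
    assume "b < 0"
    show "\<forall>\<^sub>F t in at_top. b < W t"
      using nonneg by (rule eventually_mono) (use \<open>b < 0\<close> in simp)
  next
    fix b :: real
    assume "0 < b"
    show "\<forall>\<^sub>F t in at_top. W t < b"
      using le_eventually[of "b / 2"] by (rule eventually_mono) (use \<open>0 < b\<close> in simp_all)
  qed
qed

lemma tendsto_if_positive_definite_tendsto_zero:
  fixes s :: "'b \<Rightarrow> 'a::metric_space" and V :: "'a \<Rightarrow> real"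
  assumes "compact K" and "continuous_on K V" and pos: "\<And>x. x \<in> K \<Longrightarrow> x \<noteq> p \<Longrightarrow> 0 < V x"
    and s_in: "\<forall>\<^sub>F t in F. s t \<in> K" and V_lim: "((\<lambda>t. V (s t)) \<longlongrightarrow> 0) F"
  shows "(s \<longlongrightarrow> p) F"
proof (rule tendstoI)
  fix \<epsilon> :: real
  assume "0 < \<epsilon>"
  define K' where "K' = K - ball p \<epsilon>"
  have "\<exists>c>0. \<forall>x\<in>K'. c \<le> V x"
  proof (cases "K' = {}")
    case False
    have "compact K'" and "continuous_on K' V"
      unfolding K'_def using assms(1,2) by (auto intro: compact_diff continuous_on_subset)
    then obtain x0 where "x0 \<in> K'" "\<And>x. x \<in> K' \<Longrightarrow> V x0 \<le> V x"
      using continuous_attains_inf[OF _ False] by blast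
    moreover have "0 < V x0"
      using \<open>x0 \<in> K'\<close> \<open>0 < \<epsilon>\<close> unfolding K'_def by (intro pos) auto
    ultimately show ?thesis by blast
  qed (use zero_less_one in blast)
  then obtain c where "0 < c" and c: "\<And>x. x \<in> K' \<Longrightarrow> c \<le> V x"
    by blast
  have "\<forall>\<^sub>F t in F. V (s t) < c"
    using order_tendstoD(2)[OF V_lim \<open>0 < c\<close>] .
  with s_in show "\<forall>\<^sub>F t in F. dist (s t) p < \<epsilon>"
    by eventually_elim (use c in \<open>force simp: K'_def dist_commute\<close>)
qed

lemma Lyapunov_tendsto:
  fixes s :: "real \<Rightarrow> 'a::metric_space" and V :: "'a \<Rightarrow> real"
  assumes "compact K" and V_cont: "continuous_on K V" and "p \<in> K" and "V p = 0"
    and V_pos: "\<And>x. x \<in> K \<Longrightarrow> x \<noteq> p \<Longrightarrow> 0 < V x"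
    and \<alpha>: "class_Kinf \<alpha>" and e_lim: "(e \<longlongrightarrow> 0) at_top"
    and s_in: "\<forall>\<^sub>F t in at_top. s t \<in> K"
    and deriv: "\<forall>\<^sub>F t in at_top. ((\<lambda>t. V (s t)) has_real_derivative D t) (at t)"
    and decay: "\<forall>\<^sub>F t in at_top. D t \<le> - \<alpha> (dist (s t) p) + e t"
  shows "(s \<longlongrightarrow> p) at_top"
proof (rule tendsto_if_positive_definite_tendsto_zero[OF \<open>compact K\<close> V_cont V_pos s_in])
  show "((\<lambda>t. V (s t)) \<longlongrightarrow> 0) at_top"
  proof (rule tendsto_zero_if_DERIV_uniformly_neg_above[OF deriv])
    have "0 \<le> V x" if "x \<in> K" for x
      using V_pos[OF that] \<open>V p = 0\<close> by (cases "x = p") auto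
    with s_in show "\<forall>\<^sub>F t in at_top. 0 \<le> V (s t)"
      by (auto elim: eventually_mono)
  next
    fix c :: real
    assume "0 < c"
    then obtain r where "0 < r" and r: "\<And>x. x \<in> K \<Longrightarrow> dist x p < r \<Longrightarrow> dist (V x) (V p) < c"
      using V_cont \<open>p \<in> K\<close> unfolding continuous_on_iff by blast
    have "0 < \<alpha> r"
      using class_Kinf_pos[OF \<alpha> \<open>0 < r\<close>] .
    then have "\<forall>\<^sub>F t in at_top. e t < \<alpha> r / 2"
      using order_tendstoD(2)[OF e_lim, of "\<alpha> r / 2"] by simp
    with s_in decay have "\<forall>\<^sub>F t in at_top. c \<le> V (s t) \<longrightarrow> D t \<le> - (\<alpha> r / 2)"
    proof eventually_elim
      case (elim t)
      show ?case
      proof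
        assume "c \<le> V (s t)"
        then have "r \<le> dist (s t) p"
          using r[of "s t"] elim \<open>V p = 0\<close> by (force simp: dist_real_def)
        then have "\<alpha> r \<le> \<alpha> (dist (s t) p)"
          using class_Kinf_mono[OF \<alpha>] \<open>0 < r\<close> by simp
        then show "D t \<le> - (\<alpha> r / 2)"
          using elim by linarith
      qed
    qed
    then show "\<exists>a>0. \<forall>\<^sub>F t in at_top. c \<le> V (s t) \<longrightarrow> D t \<le> - a"
      using \<open>0 < \<alpha> r\<close> by (intro exI[of _ "\<alpha> r / 2"]) simp
  qed
qed

theorem corollary3p3:
  fixes v v' :: "'r::finite \<Rightarrow> nat^'n::finite"
    and U :: "(real^'r) set" and u :: "real \<Rightarrow> real^'r" and ubar :: "real^'r"
    and s :: "real \<Rightarrow> real^'n" and s0 sbar :: "real^'n" and V :: "real^'n \<Rightarrow> real"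
  assumes reac: "\<And>j. v j \<noteq> v' j"
    and U_pos: "U \<subseteq> pos_orthant"
    and u_in: "\<And>t. 0 \<le> t \<Longrightarrow> u t \<in> U"
    and u_lim: "(u \<longlongrightarrow> ubar) at_top"
    and ubar_pos: "ubar \<in> pos_orthant"
    and s0_nonneg: "s0 \<in> nonneg_orthant"
    and s_init: "s 0 = s0"
    and s_ode: "\<And>t. 0 \<le> t \<Longrightarrow>
                 (s has_vector_derivative gma_field v v' (u t) (s t)) (at t within {0..})"
    and s_bdd: "bounded (s ` {0..})"
    and sbar_in: "sbar \<in> (\<lambda>y. s0 + y) ` stoich_subspace v v' \<inter> pos_orthant"
    and sbar_eq: "gma_field v v' ubar sbar = 0"
    and sbar_unique: "\<And>x. x \<in> (\<lambda>y. s0 + y) ` stoich_subspace v v' \<inter> pos_orthant \<Longrightarrow>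
                        gma_field v v' ubar x = 0 \<Longrightarrow> x = sbar"
    and V_ISS: "ISS_Lyapunov v v' U s0 ubar sbar V"
    and persistent: "\<And>i. Liminf at_top (\<lambda>t. ereal (s t $ i)) > 0"
  shows "(s \<longlongrightarrow> sbar) at_top"
proof -
  obtain grad where V_cont: "continuous_on nonneg_orthant V"
    and grad: "\<forall>x\<in>pos_orthant. (V has_derivative (\<lambda>h. grad x \<bullet> h)) (at x)"
    and V_sbar: "V sbar = 0" and V_pos: "\<forall>x\<in>nonneg_orthant. x \<noteq> sbar \<longrightarrow> 0 < V x"
    and ISS: "\<forall>K. compact K \<and> K \<subseteq> nonneg_orthant \<longrightarrow> (\<exists>\<alpha> \<rho>. class_Kinf \<alpha> \<and> class_Kinf \<rho> \<and>
               (\<forall>u\<in>U. \<forall>x\<in>K \<inter> (\<lambda>y. s0 + y) ` stoich_subspace v v' \<inter> pos_orthant.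
                  grad x \<bullet> gma_field v v' u x \<le> - \<alpha> (norm (x - sbar)) + \<rho> (norm (u - ubar))))"
    using V_ISS unfolding ISS_Lyapunov_def by (elim conjE exE) (rule that, assumption+)
  have late: "\<forall>\<^sub>F t in at_top. 0 < t \<and> s t \<in> pos_orthant"
    using eventually_gt_at_top eventually_pos_orthant_if_Liminf_pos[OF persistent]
    by (rule eventually_conj)
  then have "\<forall>\<^sub>F t in at_top. s t \<in> nonneg_orthant"
    using pos_orthant_subset_nonneg_orthant by (auto elim: eventually_mono)
  then obtain K where K: "compact K" "K \<subseteq> nonneg_orthant" "sbar \<in> K"
    and s_in_K: "\<forall>\<^sub>F t in at_top. s t \<in> K"
    using eventually_in_compact_subset_nonneg_orthant[OF s_bdd] sbar_in
      pos_orthant_subset_nonneg_orthant by blast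
  obtain \<alpha> \<rho> where \<alpha>: "class_Kinf \<alpha>" and \<rho>: "class_Kinf \<rho>"
    and decay: "\<forall>u\<in>U. \<forall>x\<in>K \<inter> (\<lambda>y. s0 + y) ` stoich_subspace v v' \<inter> pos_orthant.
                  grad x \<bullet> gma_field v v' u x \<le> - \<alpha> (norm (x - sbar)) + \<rho> (norm (u - ubar))"
    using ISS[rule_format, OF conjI[OF K(1,2)]] by blast
  show ?thesis
  proof (rule Lyapunov_tendsto[where K = K and p = sbar and \<alpha> = \<alpha>])
    show "compact K" "sbar \<in> K" "V sbar = 0" "class_Kinf \<alpha>" "\<forall>\<^sub>F t in at_top. s t \<in> K"
      using K V_sbar \<alpha> s_in_K by simp_all
    show "continuous_on K V"
      using V_cont K(2) by (rule continuous_on_subset)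
    show "0 < V x" if "x \<in> K" "x \<noteq> sbar" for x
      using V_pos K(2) that by auto
    show "((\<lambda>t. \<rho> (norm (u t - ubar))) \<longlongrightarrow> 0) at_top"
      using u_lim by (intro tendsto_class_Kinf_zero[OF \<rho>] tendsto_norm_zero LIM_zero) auto
    show "\<forall>\<^sub>F t in at_top. ((\<lambda>t. V (s t)) has_real_derivative
                                grad (s t) \<bullet> gma_field v v' (u t) (s t)) (at t)"
      using late
    proof eventually_elim
      case (elim t)
      then have "at t within {0..} = at t"
        by (intro at_within_interior) simp
      then show ?case
        using s_ode[of t] elim by (auto intro: has_real_derivative_gradient_comp grad[rule_format])
    qed
    show "\<forall>\<^sub>F t in at_top. grad (s t) \<bullet> gma_field v v' (u t) (s t)
                            \<le> - \<alpha> (dist (s t) sbar) + \<rho> (norm (u t - ubar))"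
      using s_in_K late
    proof eventually_elim
      case (elim t)
      then show ?case
        using decay u_in gma_solution_in_stoich_class[OF s_ode] s_init
        by (auto simp: dist_norm)
    qed
  qed
qed

end
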